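(* Let $Q\in\mathbb R^{m\times n}$ with $\mathrm{rank}(Q)=n$, $p\in\mathbb R^m$, $r>0$, $\mathcal S=\{x\in\mathbb R^n:\|Qx-p\|_2\le r\}$ with $\mathcal S\cap\mathbb Z^n\neq\emptyset$, and $\alpha\in\mathbb R^n$. Then $$\min_{x\in\mathcal S\cap\mathbb Z^n}\alpha^Tx-\min_{x\in\mathcal S}\alpha^Tx\le 2\,\|Q(Q^TQ)^{-1}\alpha\|_2\,\mu(Q).$$
   Context: For $Q\in\mathbb R^{m\times n}$ of full column rank, $\mu(Q)$ denotes the covering radius of the lattice $Q\mathbb Z^n$: $\mu(Q)=\max_{x\in\mathbb R^n}\min_{z\in\mathbb Z^n}\|Qx-Qz\|_2$. *)

theory Defs
  imports "HOL-Analysis.Analysis"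
begin

definition int_vecs :: "(real ^ 'n) set" where
  "int_vecs = {x. \<forall>i. x $ i \<in> \<int>}"

definition covering_radius :: "real ^ 'n ^ 'm \<Rightarrow> real" where
  "covering_radius Q = (SUP x. INF z\<in>int_vecs. norm (Q *v x - Q *v z))"

end

theory Submission
  imports Defs
begin

text \<open>The ball \<open>S\<close> is an ellipsoid \<open>\<parallel>Q(x - c)\<parallel> \<le> R\<close> centred at the least-squares solution \<open>c\<close>,
  and \<open>\<alpha>\<^sup>T v = \<langle>Qd, Qv\<rangle>\<close> for \<open>d = (Q\<^sup>TQ)\<^sup>-\<^sup>1\<alpha>\<close>, so \<open>\<alpha>\<^sup>T x\<close> varies by at most \<open>R\<parallel>Qd\<parallel>\<close> around
  \<open>\<alpha>\<^sup>T c\<close> on \<open>S\<close>. Walking from \<open>c\<close> in direction \<open>-d\<close> to the point \<open>y\<close> with \<open>\<parallel>Q(y - c)\<parallel> = R - \<mu>(Q)\<close>,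
  a lattice point within distance \<open>\<mu>(Q)\<close> of \<open>Qy\<close> still lies in \<open>S\<close> and has objective value at most
  \<open>\<alpha>\<^sup>T c - R\<parallel>Qd\<parallel> + 2\<parallel>Qd\<parallel>\<mu>(Q)\<close>. If \<open>R \<le> \<mu>(Q)\<close>, any integer point of \<open>S\<close> does. Since \<open>\<mu>(Q)\<close> is
  only a supremum of infima, the argument is run with \<open>\<mu>(Q) + \<epsilon>\<close> and \<open>\<epsilon> \<rightarrow> 0\<close>.\<close>

lemma transpose_matrix_vector_inner:
  fixes A :: "real ^ 'n ^ 'm"
  shows "(transpose A *v w) \<bullet> v = w \<bullet> (A *v v)"
  by (metis dot_lmul_matrix transpose_transpose vector_transpose_matrix)

lemma invertible_gram_matrix:
  fixes Q :: "real ^ 'n ^ 'm"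
  assumes "rank Q = CARD('n)"
  shows "invertible (transpose Q ** Q)"
proof -
  have "x = 0" if "(transpose Q ** Q) *v x = 0" for x
  proof -
    have "(Q *v x) \<bullet> (Q *v x) = (transpose Q *v (Q *v x)) \<bullet> x"
      by (simp only: transpose_matrix_vector_inner)
    also have "\<dots> = 0"
      using that by (simp add: matrix_vector_mul_assoc)
    finally have "Q *v x = Q *v 0"
      by simp
    then show "x = 0"
      using assms full_rank_injective by (metis injD)
  qed
  then show ?thesis
    using matrix_left_invertible_ker invertible_left_inverse by blast
qed

lemma matrix_inv_right:
  fixes A :: "'a::field ^ 'n ^ 'n"
  assumes "invertible A"
  shows "A ** matrix_inv A = mat 1"
  using assms unfolding invertible_def matrix_inv_def by (rule someI2_ex) auto

lemma matrix_vector_mul_matrix_inv: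
  fixes A :: "'a::field ^ 'n ^ 'n"
  assumes "invertible A"
  shows "A *v (matrix_inv A *v x) = x"
  by (simp add: matrix_vector_mul_assoc matrix_inv_right[OF assms])

lemma inner_eq_gram_inner:
  fixes Q :: "real ^ 'n ^ 'm"
  assumes "rank Q = CARD('n)"
  shows "\<alpha> \<bullet> v = (Q *v (matrix_inv (transpose Q ** Q) *v \<alpha>)) \<bullet> (Q *v v)"
proof -
  have "\<alpha> = transpose Q *v (Q *v (matrix_inv (transpose Q ** Q) *v \<alpha>))"
    using matrix_vector_mul_matrix_inv[OF invertible_gram_matrix[OF assms]]
    by (metis matrix_vector_mul_assoc)
  then show ?thesis
    by (metis transpose_matrix_vector_inner)
qed

lemma least_squares_pythagoras:
  fixes Q :: "real ^ 'n ^ 'm"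
  assumes normal_eq: "transpose Q *v (Q *v c) = transpose Q *v p"
  shows "norm (Q *v x - p) ^ 2 = norm (Q *v (x - c)) ^ 2 + norm (Q *v c - p) ^ 2"
proof -
  have "(Q *v (x - c)) \<bullet> (Q *v c - p) = (transpose Q *v (Q *v c - p)) \<bullet> (x - c)"
    by (metis transpose_matrix_vector_inner inner_commute)
  also have "\<dots> = 0"
    using normal_eq by (simp add: matrix_vector_mult_diff_distrib)
  finally have orth: "orthogonal (Q *v (x - c)) (Q *v c - p)"
    by (simp add: orthogonal_def)
  have "Q *v x - p = Q *v (x - c) + (Q *v c - p)"
    by (simp add: matrix_vector_mult_diff_distrib)
  then show ?thesis
    using norm_add_Pythagorean[OF orth] by (simp only:)
qed

lemma ball_preimage_eq_ellipsoid:
  fixes Q :: "real ^ 'n ^ 'm"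
  assumes "rank Q = CARD('n)" and "0 \<le> r"
  obtains c R where "\<And>x. norm (Q *v x - p) \<le> r \<longleftrightarrow> norm (Q *v (x - c)) \<le> R"
proof
  define c where "c = matrix_inv (transpose Q ** Q) *v (transpose Q *v p)"
  have "transpose Q *v (Q *v c) = transpose Q *v p"
    using matrix_vector_mul_matrix_inv[OF invertible_gram_matrix[OF assms(1)]]
    by (metis c_def matrix_vector_mul_assoc)
  note pyth = least_squares_pythagoras[OF this]
  fix x
  have "norm (Q *v x - p) \<le> r \<longleftrightarrow> norm (Q *v x - p) ^ 2 \<le> r ^ 2"
    using assms(2) by (simp add: abs_le_square_iff)
  also have "\<dots> \<longleftrightarrow> norm (Q *v (x - c)) ^ 2 \<le> r ^ 2 - norm (Q *v c - p) ^ 2"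
    using pyth[of x] by linarith
  also have "\<dots> \<longleftrightarrow> norm (Q *v (x - c)) \<le> sqrt (r ^ 2 - norm (Q *v c - p) ^ 2)"
    by (smt (verit) norm_ge_zero real_le_rsqrt real_less_lsqrt)
  finally show "norm (Q *v x - p) \<le> r \<longleftrightarrow>
      norm (Q *v (x - c)) \<le> sqrt (r ^ 2 - norm (Q *v c - p) ^ 2)" .
qed

lemma zero_in_int_vecs: "0 \<in> int_vecs"
  by (simp add: int_vecs_def)

lemma bdd_above_lattice_distance:
  fixes Q :: "real ^ 'n ^ 'm"
  shows "bdd_above (range (\<lambda>x. INF z\<in>int_vecs. norm (Q *v x - Q *v z)))"
proof -
  obtain K where K: "\<And>w. norm (Q *v w) \<le> norm w * K" and "K > 0"
    using bounded_linear.pos_bounded[OF matrix_vector_mul_bounded_linear] by blast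
  have "(INF z\<in>int_vecs. norm (Q *v x - Q *v z)) \<le> real CARD('n) * K" for x
  proof -
    define f :: "real ^ 'n" where "f = (\<chi> i. of_int \<lfloor>x $ i\<rfloor>)"
    have "f \<in> int_vecs"
      unfolding int_vecs_def f_def by auto
    then have "(INF z\<in>int_vecs. norm (Q *v x - Q *v z)) \<le> norm (Q *v (x - f))"
      by (intro cINF_lower2[of _ _ f])
        (auto intro: bdd_belowI[of _ 0] simp: matrix_vector_mult_diff_distrib)
    also have "\<dots> \<le> norm (x - f) * K"
      by (rule K)
    also have "norm (x - f) \<le> (\<Sum>i\<in>UNIV. \<bar>(x - f) $ i\<bar>)"
      by (rule norm_le_l1_cart)
    also have "\<dots> \<le> (\<Sum>i\<in>(UNIV::'n set). 1)"
      by (intro sum_mono) (simp add: f_def; linarith)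
    finally show ?thesis
      using \<open>K > 0\<close> by (simp add: mult_right_mono)
  qed
  then show ?thesis
    by (intro bdd_aboveI) auto
qed

lemma exists_lattice_point_within_covering_radius:
  fixes Q :: "real ^ 'n ^ 'm"
  assumes "\<epsilon> > 0"
  obtains z where "z \<in> int_vecs" and "norm (Q *v y - Q *v z) < covering_radius Q + \<epsilon>"
proof -
  have "(INF z\<in>int_vecs. norm (Q *v y - Q *v z)) \<le> covering_radius Q"
    unfolding covering_radius_def by (rule cSUP_upper[OF UNIV_I bdd_above_lattice_distance])
  then have "(INF z\<in>int_vecs. norm (Q *v y - Q *v z)) < covering_radius Q + \<epsilon>"
    using assms by linarith
  then show ?thesis
    using that zero_in_int_vecs cInf_lessD[of "(\<lambda>z. norm (Q *v y - Q *v z)) ` int_vecs"]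
    by blast
qed

lemma le_of_le_add_mult_epsilon:
  fixes x y c :: real
  assumes "0 \<le> c" and le: "\<And>\<epsilon>. \<epsilon> > 0 \<Longrightarrow> x \<le> y + c * \<epsilon>"
  shows "x \<le> y"
proof (rule field_le_epsilon)
  fix e :: real
  assume "e > 0"
  then have "x \<le> y + c * (e / (c + 1))"
    using assms by (intro le) simp
  also have "c * (e / (c + 1)) \<le> e"
    using assms \<open>e > 0\<close> by (simp add: field_simps)
  finally show "x \<le> y + e"
    by simp
qed

context
  fixes Q :: "real ^ 'n ^ 'm" and \<alpha> d :: "real ^ 'n"
  assumes gram_inner: "\<And>v. \<alpha> \<bullet> v = (Q *v d) \<bullet> (Q *v v)"
begin

lemma abs_inner_le_gram_norm: "\<bar>\<alpha> \<bullet> v\<bar> \<le> norm (Q *v d) * norm (Q *v v)"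
  unfolding gram_inner by (rule Cauchy_Schwarz_ineq2)

lemma ellipsoid_objective_bounds:
  assumes "norm (Q *v (x - c)) \<le> R"
  shows "\<alpha> \<bullet> c - R * norm (Q *v d) \<le> \<alpha> \<bullet> x" and "\<alpha> \<bullet> x \<le> \<alpha> \<bullet> c + R * norm (Q *v d)"
proof -
  have "\<bar>\<alpha> \<bullet> (x - c)\<bar> \<le> norm (Q *v d) * R"
    using abs_inner_le_gram_norm[of "x - c"] assms
    by (meson mult_left_mono norm_ge_zero order_trans)
  then show "\<alpha> \<bullet> c - R * norm (Q *v d) \<le> \<alpha> \<bullet> x" and "\<alpha> \<bullet> x \<le> \<alpha> \<bullet> c + R * norm (Q *v d)"
    by (auto simp: inner_diff_right mult.commute)
qed

lemma ellipsoid_lattice_point_near_min: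
  assumes "\<epsilon> > 0" and "covering_radius Q + \<epsilon> \<le> R"
  obtains z where "z \<in> int_vecs" and "norm (Q *v (z - c)) \<le> R"
    and "\<alpha> \<bullet> z \<le> \<alpha> \<bullet> c - R * norm (Q *v d) + 2 * norm (Q *v d) * (covering_radius Q + \<epsilon>)"
proof -
  define \<beta> where "\<beta> = norm (Q *v d)"
  define \<rho> where "\<rho> = covering_radius Q + \<epsilon>"
  define t where "t = (R - \<rho>) / \<beta>"
  define y where "y = c - t *\<^sub>R d"
  have "t \<ge> 0"
    using assms by (simp add: t_def \<rho>_def \<beta>_def)
  have "y - c = (- t) *\<^sub>R d"
    by (simp add: y_def)
  then have "Q *v (y - c) = (- t) *\<^sub>R (Q *v d)"
    by (simp only: matrix_vector_mult_scaleR)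
  then have "norm (Q *v (y - c)) = t * \<beta>"
    using \<open>t \<ge> 0\<close> by (simp add: \<beta>_def)
  also have "\<dots> \<le> R - \<rho>"
    using assms by (simp add: t_def \<rho>_def \<beta>_def)
  finally have y_near_c: "norm (Q *v (y - c)) \<le> R - \<rho>" .
  have "\<alpha> \<bullet> d = \<beta> ^ 2"
    by (simp add: gram_inner \<beta>_def power2_norm_eq_inner)
  then have \<alpha>y: "\<alpha> \<bullet> y = \<alpha> \<bullet> c - (R - \<rho>) * \<beta>"
    by (simp add: y_def t_def inner_diff_right power2_eq_square)
  obtain z where "z \<in> int_vecs" and "norm (Q *v y - Q *v z) < \<rho>"
    using exists_lattice_point_within_covering_radius[OF assms(1)] unfolding \<rho>_def by blast
  then have z_near_y: "norm (Q *v (z - y)) < \<rho>"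
    by (simp add: matrix_vector_mult_diff_distrib norm_minus_commute)
  have "Q *v (z - c) = Q *v (z - y) + Q *v (y - c)"
    by (simp add: matrix_vector_mult_diff_distrib)
  then have "norm (Q *v (z - c)) \<le> norm (Q *v (z - y)) + norm (Q *v (y - c))"
    by (simp only: norm_triangle_ineq)
  then have z_in_ellipsoid: "norm (Q *v (z - c)) \<le> R"
    using y_near_c z_near_y by linarith
  have "\<alpha> \<bullet> (z - y) \<le> \<beta> * \<rho>"
    using abs_inner_le_gram_norm[of "z - y"] z_near_y
    by (smt (verit, best) \<beta>_def mult_left_mono norm_ge_zero)
  then have "\<alpha> \<bullet> z \<le> \<alpha> \<bullet> c - R * \<beta> + 2 * \<beta> * \<rho>"
    using \<alpha>y by (simp add: inner_diff_right algebra_simps)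
  then show ?thesis
    using that \<open>z \<in> int_vecs\<close> z_in_ellipsoid by (simp add: \<beta>_def \<rho>_def)
qed

lemma ellipsoid_integrality_gap:
  assumes E_def: "E = {x. norm (Q *v (x - c)) \<le> R}" and "E \<inter> int_vecs \<noteq> {}"
  shows "(INF x\<in>E \<inter> int_vecs. \<alpha> \<bullet> x) - (INF x\<in>E. \<alpha> \<bullet> x)
           \<le> 2 * norm (Q *v d) * covering_radius Q"
proof -
  define \<beta> where "\<beta> = norm (Q *v d)"
  define m where "m = \<alpha> \<bullet> c - R * \<beta>"
  obtain x0 where x0: "x0 \<in> E" "x0 \<in> int_vecs"
    using assms(2) by blast
  have lower: "m \<le> \<alpha> \<bullet> x" if "x \<in> E" for x
    using ellipsoid_objective_bounds(1) that by (simp add: E_def m_def \<beta>_def)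
  have real_min: "m \<le> (INF x\<in>E. \<alpha> \<bullet> x)"
    using x0 lower by (intro cINF_greatest) auto
  have int_min_le: "(INF x\<in>E \<inter> int_vecs. \<alpha> \<bullet> x) \<le> \<alpha> \<bullet> z"
    if "z \<in> E" "z \<in> int_vecs" for z
    using that lower by (intro cINF_lower bdd_belowI[of _ m]) auto
  have int_min: "(INF x\<in>E \<inter> int_vecs. \<alpha> \<bullet> x) \<le> m + 2 * \<beta> * covering_radius Q + 2 * \<beta> * \<epsilon>"
    if \<epsilon>_pos: "\<epsilon> > 0" for \<epsilon>
  proof (cases "covering_radius Q + \<epsilon> \<le> R")
    case True
    then obtain z where "z \<in> int_vecs" "z \<in> E"
      and "\<alpha> \<bullet> z \<le> m + 2 * \<beta> * (covering_radius Q + \<epsilon>)"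
      using ellipsoid_lattice_point_near_min[OF \<epsilon>_pos True] by (auto simp: E_def m_def \<beta>_def)
    then show ?thesis
      using int_min_le by (fastforce simp: distrib_left)
  next
    case False
    have "\<alpha> \<bullet> x0 \<le> \<alpha> \<bullet> c + R * \<beta>"
      using ellipsoid_objective_bounds(2)[of x0 c R] x0 by (simp add: E_def \<beta>_def)
    moreover have "2 * \<beta> * R \<le> 2 * \<beta> * (covering_radius Q + \<epsilon>)"
      using False by (intro mult_left_mono) (auto simp: \<beta>_def)
    ultimately show ?thesis
      using int_min_le[OF x0] unfolding m_def by (simp add: algebra_simps)
  qed
  show ?thesis
    unfolding \<beta>_def[symmetric]
  proof (rule le_of_le_add_mult_epsilon)
    show "0 \<le> 2 * \<beta>"
      by (simp add: \<beta>_def)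
    show "(INF x\<in>E \<inter> int_vecs. \<alpha> \<bullet> x) - (INF x\<in>E. \<alpha> \<bullet> x)
        \<le> 2 * \<beta> * covering_radius Q + 2 * \<beta> * \<epsilon>" if "\<epsilon> > 0" for \<epsilon>
      using int_min[OF that] real_min by linarith
  qed
qed

end

theorem proposition6p2:
  fixes Q :: "real ^ 'n ^ 'm" and p :: "real ^ 'm" and r :: real and \<alpha> :: "real ^ 'n"
    and S :: "(real ^ 'n) set"
  assumes rank: "rank Q = CARD('n)"
    and r_pos: "r > 0"
    and S_def: "S = {x. norm (Q *v x - p) \<le> r}"
    and nonempty: "S \<inter> int_vecs \<noteq> {}"
  shows "(INF x\<in>S \<inter> int_vecs. \<alpha> \<bullet> x) - (INF x\<in>S. \<alpha> \<bullet> x)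
           \<le> 2 * norm (Q *v (matrix_inv (transpose Q ** Q) *v \<alpha>)) * covering_radius Q"
proof -
  obtain c R where "\<And>x. norm (Q *v x - p) \<le> r \<longleftrightarrow> norm (Q *v (x - c)) \<le> R"
    using ball_preimage_eq_ellipsoid[OF rank] r_pos by (metis less_imp_le)
  then have "S = {x. norm (Q *v (x - c)) \<le> R}"
    by (simp add: S_def)
  then show ?thesis
    using ellipsoid_integrality_gap[OF inner_eq_gram_inner[OF rank] _ nonempty] by blast
qed

end
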